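(* Under the assumptions on $\Psi$ stated in the context, let $T\in(0,\infty]$, let $g^{in}\in L^1_{-2\beta,1}(0,\infty)$ be non-negative, let $g$ be a weak solution on $[0,T)$, and let $t\in(0,T)$. Then (i) $\lim_{q\to\infty}\int_0^t\int_0^q\int_q^\infty\zeta\Psi(\zeta,\eta)g(\zeta,s)g(\eta,s)d\eta d\zeta ds=0$, and (ii) $\lim_{q\to\infty}q\int_0^t\int_q^\infty\int_q^\infty\Psi(\zeta,\eta)g(\zeta,s)g(\eta,s)d\eta d\zeta ds=0$.
   Context: $\Psi:(0,\infty)^2\to[0,\infty)$ is measurable and symmetric and there are $\beta>0$, $k>0$ with $\Psi(\zeta,\eta)\le k(\zeta\eta)^{-\beta}$ on $(0,1)^2$, $\Psi(\zeta,\eta)\le k\eta\zeta^{-\beta}$ on $(0,1)\times(1,\infty)$, and $\Psi(\zeta,\eta)\le k(\zeta+\eta)$ on $(1,\infty)^2$. $L^1_{-2\beta,1}(0,\infty):=L^1((0,\infty);(\zeta^{-2\beta}+\zeta)d\zeta)$. A weak solution on $[0,T)$ is a non-negative $g\in\mathcal{C}([0,T);L^1(0,\infty))\cap L^\infty(0,T;L^1_{-2\beta,1}(0,\infty))$ such that for every $t\in(0,T)$ and $\omega\in L^\infty(0,\infty)$, $\int_0^\infty[g(\zeta,t)-g^{in}(\zeta)]\omega(\zeta)d\zeta=\frac12\int_0^t\int_0^\infty\int_0^\infty[\omega(\zeta+\eta)-\omega(\zeta)-\omega(\eta)]\Psi(\zeta,\eta)g(\zeta,s)g(\eta,s)d\eta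 d\zeta ds$. *)

theory Defs
  imports "HOL-Analysis.Analysis"
begin

definition kernel_hyp :: "(real \<Rightarrow> real \<Rightarrow> real) \<Rightarrow> real \<Rightarrow> real \<Rightarrow> bool" where
  "kernel_hyp \<Psi> \<beta> k \<longleftrightarrow>
     0 < \<beta> \<and> 0 < k \<and>
     (\<lambda>p. indicator ({0<..} \<times> {0<..}) p * \<Psi> (fst p) (snd p)) \<in> borel_measurable borel \<and>
     (\<forall>\<zeta>>0. \<forall>\<eta>>0. 0 \<le> \<Psi> \<zeta> \<eta> \<and> \<Psi> \<zeta> \<eta> = \<Psi> \<eta> \<zeta>) \<and>
     (\<forall>\<zeta>\<in>{0<..<1}. \<forall>\<eta>\<in>{0<..<1}. \<Psi> \<zeta> \<eta> \<le> k * (\<zeta> * \<eta>) powr (-\<beta>)) \<and>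
     (\<forall>\<zeta>\<in>{0<..<1}. \<forall>\<eta>\<in>{1<..}. \<Psi> \<zeta> \<eta> \<le> k * \<eta> * \<zeta> powr (-\<beta>)) \<and>
     (\<forall>\<zeta>\<in>{1<..}. \<forall>\<eta>\<in>{1<..}. \<Psi> \<zeta> \<eta> \<le> k * (\<zeta> + \<eta>))"

definition wgt :: "real \<Rightarrow> real \<Rightarrow> real" where
  "wgt \<beta> \<zeta> = \<zeta> powr (-2 * \<beta>) + \<zeta>"

definition init_hyp :: "real \<Rightarrow> (real \<Rightarrow> real) \<Rightarrow> bool" where
  "init_hyp \<beta> gin \<longleftrightarrow>
     gin \<in> borel_measurable borel \<and>
     (\<forall>\<zeta>>0. 0 \<le> gin \<zeta>) \<and>
     set_integrable lborel {0<..} (\<lambda>\<zeta>. wgt \<beta> \<zeta> * gin \<zeta>)"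

definition tint :: "ereal \<Rightarrow> real set" where
  "tint T = {s. 0 \<le> s \<and> ereal s < T}"

definition weak_solution ::
  "(real \<Rightarrow> real \<Rightarrow> real) \<Rightarrow> real \<Rightarrow> ereal \<Rightarrow> (real \<Rightarrow> real) \<Rightarrow> (real \<Rightarrow> real \<Rightarrow> real) \<Rightarrow> bool" where
  "weak_solution \<Psi> \<beta> T gin g \<longleftrightarrow>
     \<comment> \<open>joint (Borel) measurability on (0,inf) x [0,T) and non-negativity\<close>
     (\<lambda>p. indicator ({0<..} \<times> tint T) p * g (fst p) (snd p)) \<in> borel_measurable borel \<and>
     (\<forall>s\<in>tint T. \<forall>\<zeta>>0. 0 \<le> g \<zeta> s) \<and>
     \<comment> \<open>g in C([0,T); L^1(0,inf))\<close>
     (\<forall>s\<in>tint T. set_integrable lborel {0<..} (\<lambda>\<zeta>. g \<zeta> s)) \<and>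
     (\<forall>t0\<in>tint T. ((\<lambda>s. LINT \<zeta>:{0<..}|lborel. \<bar>g \<zeta> s - g \<zeta> t0\<bar>) \<longlongrightarrow> 0)
                      (at t0 within tint T)) \<and>
     \<comment> \<open>g in L^inf(0,T; L^1_{-2beta,1}(0,inf))\<close>
     (\<exists>M. \<forall>s\<in>tint T. set_integrable lborel {0<..} (\<lambda>\<zeta>. wgt \<beta> \<zeta> * g \<zeta> s) \<and>
                       (LINT \<zeta>:{0<..}|lborel. wgt \<beta> \<zeta> * g \<zeta> s) \<le> M) \<and>
     \<comment> \<open>weak formulation, for all t in (0,T) and all bounded measurable test functions\<close>
     (\<forall>t\<in>tint T. t > 0 \<longrightarrow> (\<forall>\<omega>::real\<Rightarrow>real. \<omega> \<in> borel_measurable borel \<longrightarrow>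
        (\<exists>B. \<forall>x>0. \<bar>\<omega> x\<bar> \<le> B) \<longrightarrow>
        (LINT \<zeta>:{0<..}|lborel. (g \<zeta> t - gin \<zeta>) * \<omega> \<zeta>) =
        1/2 * (LINT s:{0..t}|lborel. LINT \<zeta>:{0<..}|lborel. LINT \<eta>:{0<..}|lborel.
                 (\<omega> (\<zeta> + \<eta>) - \<omega> \<zeta> - \<omega> \<eta>) * \<Psi> \<zeta> \<eta> * g \<zeta> s * g \<eta> s)))"

end

theory Submission
  imports Defs
begin

text \<open>For \<open>q > 1\<close> the growth bounds on the kernel give
  \<open>\<zeta> \<Psi>(\<zeta>,\<eta>) \<le> 2k wgt(\<zeta>) \<eta>\<close> when \<open>\<zeta> \<le> q < \<eta>\<close>, and \<open>q \<Psi>(\<zeta>,\<eta>) \<le> 2k \<zeta> \<eta>\<close> when \<open>\<zeta>, \<eta> > q\<close>.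
  Since the weighted moments of a weak solution are bounded uniformly in time by some \<open>M\<close>, both
  quantities are therefore at most \<open>2kM\<close> times the time-integrated tail of the first moment,
  \<open>\<integral>\<^sub>0\<^sup>t \<integral>\<^sub>q\<^sup>\<infinity> \<eta> g(\<eta>,s) d\<eta> ds\<close>, which tends to \<open>0\<close> by dominated convergence, applied once in
  \<open>\<eta>\<close> and once in \<open>s\<close>.\<close>

definition tail_moment :: "(real \<Rightarrow> real) \<Rightarrow> real \<Rightarrow> ennreal" where
  "tail_moment f q = (\<integral>\<^sup>+\<eta>\<in>{q<..}. ennreal (\<eta> * f \<eta>) \<partial>lborel)"

lemma ennreal_tendsto_zero_le_cmult:
  fixes f h :: "'a \<Rightarrow> ennreal"
  assumes "(h \<longlongrightarrow> 0) F" and "c < \<infinity>" and "\<forall>\<^sub>F x in F. f x \<le> c * h x"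
  shows "(f \<longlongrightarrow> 0) F"
proof (rule tendsto_sandwich[where f="\<lambda>_. 0"])
  show "((\<lambda>x. c * h x) \<longlongrightarrow> 0) F"
    using ennreal_tendsto_cmult[of c h 0 F] assms(1,2) by simp
qed (use assms(3) in auto)

lemma nn_integral_tendsto_zero_dominated:
  fixes f :: "real \<Rightarrow> 'a \<Rightarrow> ennreal"
  assumes [measurable]: "\<And>q. f q \<in> borel_measurable M" "w \<in> borel_measurable M"
    and "\<And>q. AE x in M. f q x \<le> w x" and "(\<integral>\<^sup>+x. w x \<partial>M) < \<infinity>"
    and lim: "AE x in M. ((\<lambda>q. f q x) \<longlongrightarrow> 0) at_top"
  shows "((\<lambda>q. \<integral>\<^sup>+x. f q x \<partial>M) \<longlongrightarrow> 0) at_top"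
proof (rule tendsto_at_topI_sequentially)
  fix X :: "nat \<Rightarrow> real"
  assume X: "filterlim X at_top sequentially"
  have "AE x in M. (\<lambda>n. f (X n) x) \<longlonglongrightarrow> 0"
    using lim by eventually_elim (rule filterlim_compose[OF _ X])
  then have "(\<lambda>n. \<integral>\<^sup>+x. f (X n) x \<partial>M) \<longlonglongrightarrow> (\<integral>\<^sup>+x. 0 \<partial>M)"
    using assms by (intro nn_integral_dominated_convergence[where w=w]) auto
  then show "(\<lambda>n. \<integral>\<^sup>+x. f (X n) x \<partial>M) \<longlonglongrightarrow> 0"
    by simp
qed

lemma nn_set_integral_le_cmult:
  assumes "\<And>x. x \<in> A \<Longrightarrow> f x \<le> c * h x" and [measurable]: "h \<in> borel_measurable M" "A \<in> sets M"
  shows "(\<integral>\<^sup>+x\<in>A. f x \<partial>M) \<le> c * (\<integral>\<^sup>+x\<in>A. h x \<partial>M)"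
proof -
  have "(\<integral>\<^sup>+x\<in>A. f x \<partial>M) \<le> (\<integral>\<^sup>+x. c * (h x * indicator A x) \<partial>M)"
    using assms(1) by (intro nn_integral_mono) (auto simp: indicator_def)
  also have "\<dots> = c * (\<integral>\<^sup>+x\<in>A. h x \<partial>M)"
    by (intro nn_integral_cmult) measurable
  finally show ?thesis .
qed

lemma nn_set_integral_le_product:
  fixes f :: "'a \<Rightarrow> 'b \<Rightarrow> ennreal"
  assumes bound: "AE x in M. x \<in> A \<longrightarrow> (\<forall>y\<in>B. f x y \<le> a x * b y)"
    and [measurable]: "a \<in> borel_measurable M" "b \<in> borel_measurable N" "A \<in> sets M" "B \<in> sets N"
  shows "(\<integral>\<^sup>+x\<in>A. \<integral>\<^sup>+y\<in>B. f x y \<partial>N \<partial>M) \<le> (\<integral>\<^sup>+x\<in>A. a x \<partial>M) * (\<integral>\<^sup>+y\<in>B. b y \<partial>N)"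
proof -
  have "(\<integral>\<^sup>+x\<in>A. \<integral>\<^sup>+y\<in>B. f x y \<partial>N \<partial>M)
      \<le> (\<integral>\<^sup>+x. a x * indicator A x * (\<integral>\<^sup>+y\<in>B. b y \<partial>N) \<partial>M)"
  proof (rule nn_integral_mono_AE)
    show "AE x in M. (\<integral>\<^sup>+y\<in>B. f x y \<partial>N) * indicator A x
        \<le> a x * indicator A x * (\<integral>\<^sup>+y\<in>B. b y \<partial>N)"
      using bound
    proof eventually_elim
      case (elim x)
      show ?case
      proof (cases "x \<in> A")
        case True
        then have "(\<integral>\<^sup>+y\<in>B. f x y \<partial>N) \<le> (\<integral>\<^sup>+y. a x * (b y * indicator B y) \<partial>N)"
          using elim by (intro nn_integral_mono) (auto simp: indicator_def)
        also have "\<dots> = a x * (\<integral>\<^sup>+y\<in>B. b y \<partial>N)"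
          by (rule nn_integral_cmult) measurable
        finally show ?thesis
          using True by simp
      qed simp
    qed
  qed
  also have "\<dots> = (\<integral>\<^sup>+x\<in>A. a x \<partial>M) * (\<integral>\<^sup>+y\<in>B. b y \<partial>N)"
    by (rule nn_integral_multc) measurable
  finally show ?thesis .
qed

lemma measurable_section:
  fixes G :: "real \<Rightarrow> real \<Rightarrow> real"
  assumes "(\<lambda>p. G (fst p) (snd p)) \<in> borel_measurable borel"
  shows "(\<lambda>z. G z s) \<in> borel_measurable borel"
proof -
  have "(\<lambda>z::real. (z, s)) \<in> borel_measurable borel"
    by (intro borel_measurable_continuous_onI continuous_intros)
  from measurable_compose[OF this assms] show ?thesis
    by simp
qed

lemma measurable_tail_moment:
  fixes G :: "real \<Rightarrow> real \<Rightarrow> real"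
  assumes "(\<lambda>p. G (fst p) (snd p)) \<in> borel_measurable borel"
  shows "(\<lambda>s. tail_moment (\<lambda>z. G z s) q) \<in> borel_measurable borel"
proof -
  have "(\<lambda>p. (snd p, fst p)) \<in> borel_measurable (borel :: (real \<times> real) measure)"
    by (intro borel_measurable_continuous_onI continuous_intros)
  from measurable_compose[OF this assms]
  have "(\<lambda>p. G (snd p) (fst p)) \<in> borel_measurable (lborel \<Otimes>\<^sub>M lborel)"
    by (simp add: lborel_prod)
  then have "(\<lambda>p. ennreal (snd p * G (snd p) (fst p)) * indicator {q<..} (snd p))
      \<in> borel_measurable (lborel \<Otimes>\<^sub>M lborel)"
    by measurable
  then show ?thesis
    using lborel.borel_measurable_nn_integral[of "\<lambda>s \<eta>. ennreal (\<eta> * G \<eta> s) * indicator {q<..} \<eta>"]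
    by (simp add: tail_moment_def)
qed

text \<open>No restriction on \<open>q\<close> is needed: for \<open>\<eta> \<le> 0\<close> the integrand \<open>ennreal (\<eta> * f \<eta>)\<close> is \<open>0\<close>.\<close>

lemma tail_moment_le_moment:
  assumes "\<And>z. 0 \<le> f z"
  shows "tail_moment f q \<le> (\<integral>\<^sup>+\<eta>\<in>{0<..}. ennreal (\<eta> * f \<eta>) \<partial>lborel)"
  unfolding tail_moment_def
  using assms by (intro nn_integral_mono) (auto simp: indicator_def ennreal_neg mult_nonpos_nonneg)

lemma tail_moment_tendsto_zero:
  assumes [measurable]: "f \<in> borel_measurable borel" and "\<And>z. 0 \<le> f z"
    and "(\<integral>\<^sup>+\<eta>\<in>{0<..}. ennreal (\<eta> * f \<eta>) \<partial>lborel) < \<infinity>"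
  shows "(tail_moment f \<longlongrightarrow> 0) at_top"
  unfolding tail_moment_def[abs_def]
proof (rule nn_integral_tendsto_zero_dominated)
  show "AE \<eta> in lborel. ennreal (\<eta> * f \<eta>) * indicator {q<..} \<eta> \<le> ennreal (\<eta> * f \<eta>) * indicator {0<..} \<eta>"
    for q
    using assms(2) by (intro AE_I2) (auto simp: indicator_def ennreal_neg mult_nonpos_nonneg)
  show "AE \<eta> in lborel. ((\<lambda>q. ennreal (\<eta> * f \<eta>) * indicator {q<..} \<eta>) \<longlongrightarrow> 0) at_top"
  proof (intro AE_I2 tendsto_eventually)
    show "\<forall>\<^sub>F q in at_top. ennreal (\<eta> * f \<eta>) * indicator {q<..} \<eta> = 0" for \<eta>
      using eventually_ge_at_top[of \<eta>] by eventually_elim (simp add: indicator_def)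
  qed
qed (use assms(3) in auto)

lemma wgt_ge_self: "0 \<le> \<zeta> \<Longrightarrow> \<zeta> \<le> wgt \<beta> \<zeta>"
  by (simp add: wgt_def)

lemma wgt_nonneg: "0 \<le> \<zeta> \<Longrightarrow> 0 \<le> wgt \<beta> \<zeta>"
  by (simp add: wgt_def)

lemma measurable_wgt [measurable]: "wgt \<beta> \<in> borel_measurable borel"
  unfolding wgt_def[abs_def] by measurable

lemma kernel_hyp_small_large_bound:
  assumes K: "kernel_hyp \<Psi> \<beta> k" and "0 < \<zeta>" "\<zeta> \<noteq> 1" "1 < \<eta>" "\<zeta> < \<eta>"
  shows "\<zeta> * \<Psi> \<zeta> \<eta> \<le> 2 * k * wgt \<beta> \<zeta> * \<eta>"
proof (cases "\<zeta> < 1")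
  case True
  from K have "0 < \<beta>" "0 < k" "\<forall>\<zeta>\<in>{0<..<1}. \<forall>\<eta>\<in>{1<..}. \<Psi> \<zeta> \<eta> \<le> k * \<eta> * \<zeta> powr (-\<beta>)"
    unfolding kernel_hyp_def by blast+
  with assms True have \<Psi>: "\<Psi> \<zeta> \<eta> \<le> k * \<eta> * \<zeta> powr (-\<beta>)"
    by simp
  have "\<zeta> * \<Psi> \<zeta> \<eta> \<le> \<zeta> * (k * \<eta> * \<zeta> powr (-\<beta>))"
    using \<Psi> \<open>0 < \<zeta>\<close> by (intro mult_left_mono) auto
  also have "\<dots> = k * \<eta> * \<zeta> powr (1 - \<beta>)"
    using \<open>0 < \<zeta>\<close> by (simp add: powr_diff powr_minus divide_simps)
  also have "\<dots> \<le> k * \<eta> * \<zeta> powr (-2 * \<beta>)"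
    using assms True \<open>0 < \<beta>\<close> \<open>0 < k\<close> by (intro mult_left_mono powr_mono') auto
  also have "\<dots> \<le> 2 * k * wgt \<beta> \<zeta> * \<eta>"
    using assms \<open>0 < k\<close> unfolding wgt_def by (simp add: algebra_simps)
  finally show ?thesis .
next
  case False
  with assms have "1 < \<zeta>" by auto
  from K have "0 < k" "\<forall>\<zeta>\<in>{1<..}. \<forall>\<eta>\<in>{1<..}. \<Psi> \<zeta> \<eta> \<le> k * (\<zeta> + \<eta>)"
    unfolding kernel_hyp_def by blast+
  with assms \<open>1 < \<zeta>\<close> have "\<Psi> \<zeta> \<eta> \<le> k * (\<zeta> + \<eta>)"
    by simp
  also have "k * (\<zeta> + \<eta>) \<le> k * (2 * \<eta>)"
    using \<open>\<zeta> < \<eta>\<close> \<open>0 < k\<close> by (intro mult_left_mono) auto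
  finally have "\<Psi> \<zeta> \<eta> \<le> 2 * k * \<eta>"
    by simp
  then have "\<zeta> * \<Psi> \<zeta> \<eta> \<le> \<zeta> * (2 * k * \<eta>)"
    using \<open>0 < \<zeta>\<close> by (intro mult_left_mono) auto
  also have "\<dots> \<le> wgt \<beta> \<zeta> * (2 * k * \<eta>)"
    using assms \<open>0 < k\<close> wgt_ge_self[of \<zeta> \<beta>] by (intro mult_right_mono) auto
  finally show ?thesis
    by (simp add: algebra_simps)
qed

lemma kernel_hyp_large_large_bound:
  assumes K: "kernel_hyp \<Psi> \<beta> k" and "1 < q" "q < \<zeta>" "q < \<eta>"
  shows "\<Psi> \<zeta> \<eta> \<le> 2 * k / q * \<zeta> * \<eta>"
proof -
  from K have "0 < k" "\<forall>\<zeta>\<in>{1<..}. \<forall>\<eta>\<in>{1<..}. \<Psi> \<zeta> \<eta> \<le> k * (\<zeta> + \<eta>)"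
    unfolding kernel_hyp_def by blast+
  with assms have \<Psi>: "\<Psi> \<zeta> \<eta> \<le> k * (\<zeta> + \<eta>)"
    by simp
  have "q * \<zeta> \<le> \<eta> * \<zeta>" "q * \<eta> \<le> \<zeta> * \<eta>"
    using assms by (auto intro: mult_right_mono)
  then have "q * (\<zeta> + \<eta>) \<le> 2 * \<zeta> * \<eta>"
    by (simp add: algebra_simps)
  then have "k * (q * (\<zeta> + \<eta>)) \<le> k * (2 * \<zeta> * \<eta>)"
    using \<open>0 < k\<close> by (intro mult_left_mono) auto
  then have "k * (\<zeta> + \<eta>) \<le> 2 * k / q * \<zeta> * \<eta>"
    using assms by (simp add: field_simps)
  with \<Psi> show ?thesis
    by linarith
qed

lemma small_large_flux_le:
  fixes f :: "real \<Rightarrow> real"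
  assumes K: "kernel_hyp \<Psi> \<beta> k" and "1 < q"
    and [measurable]: "f \<in> borel_measurable borel" and f_nonneg: "\<And>z. 0 \<le> f z"
  shows "(\<integral>\<^sup>+\<zeta>\<in>{0<..q}. \<integral>\<^sup>+\<eta>\<in>{q<..}. ennreal (\<zeta> * \<Psi> \<zeta> \<eta> * f \<zeta> * f \<eta>) \<partial>lborel \<partial>lborel)
     \<le> ennreal (2 * k) * (\<integral>\<^sup>+\<zeta>\<in>{0<..}. ennreal (wgt \<beta> \<zeta> * f \<zeta>) \<partial>lborel) * tail_moment f q"
proof -
  have "0 < k"
    using K by (simp add: kernel_hyp_def)
  have pointwise: "ennreal (\<zeta> * \<Psi> \<zeta> \<eta> * f \<zeta> * f \<eta>)
      \<le> ennreal (2 * k) * ennreal (wgt \<beta> \<zeta> * f \<zeta>) * ennreal (\<eta> * f \<eta>)"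
    if "\<zeta> \<in> {0<..q}" "\<zeta> \<noteq> 1" "\<eta> \<in> {q<..}" for \<zeta> \<eta>
  proof -
    have "\<zeta> * \<Psi> \<zeta> \<eta> * f \<zeta> * f \<eta> = (\<zeta> * \<Psi> \<zeta> \<eta>) * (f \<zeta> * f \<eta>)"
      by simp
    also have "\<dots> \<le> (2 * k * wgt \<beta> \<zeta> * \<eta>) * (f \<zeta> * f \<eta>)"
      using kernel_hyp_small_large_bound[OF K, of \<zeta> \<eta>] that \<open>1 < q\<close> f_nonneg
      by (intro mult_right_mono) auto
    also have "\<dots> = (2 * k) * (wgt \<beta> \<zeta> * f \<zeta>) * (\<eta> * f \<eta>)"
      by simp
    finally show ?thesis
      using that \<open>0 < k\<close> \<open>1 < q\<close> f_nonneg wgt_ge_self[of \<zeta> \<beta>]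
      by (simp add: ennreal_mult[symmetric] ennreal_leI)
  qed
  have "(\<integral>\<^sup>+\<zeta>\<in>{0<..q}. \<integral>\<^sup>+\<eta>\<in>{q<..}. ennreal (\<zeta> * \<Psi> \<zeta> \<eta> * f \<zeta> * f \<eta>) \<partial>lborel \<partial>lborel)
      \<le> (\<integral>\<^sup>+\<zeta>\<in>{0<..q}. ennreal (2 * k) * ennreal (wgt \<beta> \<zeta> * f \<zeta>) \<partial>lborel) * tail_moment f q"
    unfolding tail_moment_def
  proof (rule nn_set_integral_le_product)
    show "AE \<zeta> in lborel. \<zeta> \<in> {0<..q} \<longrightarrow> (\<forall>\<eta>\<in>{q<..}. ennreal (\<zeta> * \<Psi> \<zeta> \<eta> * f \<zeta> * f \<eta>)
        \<le> ennreal (2 * k) * ennreal (wgt \<beta> \<zeta> * f \<zeta>) * ennreal (\<eta> * f \<eta>))"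
      using AE_lborel_singleton[of 1] by eventually_elim (use pointwise in auto)
  qed measurable
  also have "(\<integral>\<^sup>+\<zeta>\<in>{0<..q}. ennreal (2 * k) * ennreal (wgt \<beta> \<zeta> * f \<zeta>) \<partial>lborel)
      \<le> (\<integral>\<^sup>+\<zeta>. ennreal (2 * k) * (ennreal (wgt \<beta> \<zeta> * f \<zeta>) * indicator {0<..} \<zeta>) \<partial>lborel)"
    by (intro nn_integral_mono) (auto simp: indicator_def)
  also have "\<dots> = ennreal (2 * k) * (\<integral>\<^sup>+\<zeta>\<in>{0<..}. ennreal (wgt \<beta> \<zeta> * f \<zeta>) \<partial>lborel)"
    by (rule nn_integral_cmult) measurable
  finally show ?thesis
    by (simp add: mult_right_mono)
qed

lemma large_large_flux_le:
  fixes f :: "real \<Rightarrow> real"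
  assumes K: "kernel_hyp \<Psi> \<beta> k" and "1 < q"
    and [measurable]: "f \<in> borel_measurable borel" and f_nonneg: "\<And>z. 0 \<le> f z"
  shows "(\<integral>\<^sup>+\<zeta>\<in>{q<..}. \<integral>\<^sup>+\<eta>\<in>{q<..}. ennreal (\<Psi> \<zeta> \<eta> * f \<zeta> * f \<eta>) \<partial>lborel \<partial>lborel)
     \<le> ennreal (2 * k / q) * tail_moment f q * tail_moment f q"
proof -
  have "0 < k"
    using K by (simp add: kernel_hyp_def)
  define c where "c = 2 * k / q"
  have pointwise: "ennreal (\<Psi> \<zeta> \<eta> * f \<zeta> * f \<eta>) \<le> ennreal c * ennreal (\<zeta> * f \<zeta>) * ennreal (\<eta> * f \<eta>)"
    if "\<zeta> \<in> {q<..}" "\<eta> \<in> {q<..}" for \<zeta> \<eta>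
  proof -
    have "\<Psi> \<zeta> \<eta> * f \<zeta> * f \<eta> = \<Psi> \<zeta> \<eta> * (f \<zeta> * f \<eta>)"
      by simp
    also have "\<dots> \<le> (c * \<zeta> * \<eta>) * (f \<zeta> * f \<eta>)"
      using kernel_hyp_large_large_bound[OF K, of q \<zeta> \<eta>] that \<open>1 < q\<close> f_nonneg
      unfolding c_def by (intro mult_right_mono) auto
    also have "\<dots> = c * (\<zeta> * f \<zeta>) * (\<eta> * f \<eta>)"
      by simp
    finally show ?thesis
      using that \<open>0 < k\<close> \<open>1 < q\<close> f_nonneg
      by (simp add: c_def ennreal_mult[symmetric] ennreal_leI)
  qed
  have "(\<integral>\<^sup>+\<zeta>\<in>{q<..}. \<integral>\<^sup>+\<eta>\<in>{q<..}. ennreal (\<Psi> \<zeta> \<eta> * f \<zeta> * f \<eta>) \<partial>lborel \<partial>lborel)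
      \<le> (\<integral>\<^sup>+\<zeta>\<in>{q<..}. ennreal c * ennreal (\<zeta> * f \<zeta>) \<partial>lborel) * tail_moment f q"
    unfolding tail_moment_def
    by (rule nn_set_integral_le_product) (use pointwise in auto)
  also have "\<dots> = ennreal c * tail_moment f q * tail_moment f q"
    unfolding tail_moment_def mult.assoc by (subst nn_integral_cmult) (simp_all add: mult_ac)
  finally show ?thesis
    unfolding c_def .
qed

locale moment_bounded_density =
  fixes \<beta> :: real and G :: "real \<Rightarrow> real \<Rightarrow> real" and t :: real and M :: ennreal
  assumes measurable_density: "(\<lambda>p. G (fst p) (snd p)) \<in> borel_measurable borel"
    and density_nonneg: "\<And>z s. 0 \<le> G z s"
    and weighted_moment_le:
      "\<And>s. s \<in> {0..t} \<Longrightarrow> (\<integral>\<^sup>+z\<in>{0<..}. ennreal (wgt \<beta> z * G z s) \<partial>lborel) \<le> M"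
    and bound_finite: "M < \<infinity>"
begin

lemma measurable_density_section [measurable]: "(\<lambda>z. G z s) \<in> borel_measurable borel"
  using measurable_density by (rule measurable_section)

lemma first_moment_le:
  assumes "s \<in> {0..t}"
  shows "(\<integral>\<^sup>+z\<in>{0<..}. ennreal (z * G z s) \<partial>lborel) \<le> M"
proof -
  have "(\<integral>\<^sup>+z\<in>{0<..}. ennreal (z * G z s) \<partial>lborel) \<le> (\<integral>\<^sup>+z\<in>{0<..}. ennreal (wgt \<beta> z * G z s) \<partial>lborel)"
    using wgt_ge_self density_nonneg
    by (intro nn_integral_mono) (auto simp: indicator_def intro!: ennreal_leI mult_right_mono)
  also have "\<dots> \<le> M"
    using assms by (rule weighted_moment_le)
  finally show ?thesis .
qed

lemma tail_moment_le: "s \<in> {0..t} \<Longrightarrow> tail_moment (\<lambda>z. G z s) q \<le> M"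
  using tail_moment_le_moment[of "\<lambda>z. G z s"] first_moment_le density_nonneg by (blast intro: order_trans)

lemma integrated_tail_moment_tendsto_zero:
  "((\<lambda>q. \<integral>\<^sup>+s\<in>{0..t}. tail_moment (\<lambda>z. G z s) q \<partial>lborel) \<longlongrightarrow> 0) at_top"
proof (rule nn_integral_tendsto_zero_dominated[where w="\<lambda>s. M * indicator {0..t} s"])
  show "(\<lambda>s. tail_moment (\<lambda>z. G z s) q * indicator {0..t} s) \<in> borel_measurable lborel" for q
    using measurable_tail_moment[OF measurable_density, of q] by measurable
  show "AE s in lborel. tail_moment (\<lambda>z. G z s) q * indicator {0..t} s \<le> M * indicator {0..t} s" for q
    using tail_moment_le by (auto simp: indicator_def)
  show "(\<integral>\<^sup>+s. M * indicator {0..t} s \<partial>lborel) < \<infinity>"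
    using bound_finite by (cases "0 \<le> t") (auto simp: nn_integral_cmult_indicator ennreal_mult_less_top)
  have "((\<lambda>q. tail_moment (\<lambda>z. G z s) q * indicator {0..t} s) \<longlongrightarrow> 0) at_top" for s
  proof (cases "s \<in> {0..t}")
    case True
    with first_moment_le bound_finite have "(\<integral>\<^sup>+z\<in>{0<..}. ennreal (z * G z s) \<partial>lborel) < \<infinity>"
      by (blast intro: le_less_trans)
    with True show ?thesis
      using tail_moment_tendsto_zero[of "\<lambda>z. G z s"] density_nonneg by simp
  qed simp
  then show "AE s in lborel. ((\<lambda>q. tail_moment (\<lambda>z. G z s) q * indicator {0..t} s) \<longlongrightarrow> 0) at_top"
    by simp
qed simp

lemma integrated_small_large_flux_le:
  assumes "kernel_hyp \<Psi> \<beta> k" and "1 < q"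
  shows "(\<integral>\<^sup>+s\<in>{0..t}. \<integral>\<^sup>+\<zeta>\<in>{0<..q}. \<integral>\<^sup>+\<eta>\<in>{q<..}.
            ennreal (\<zeta> * \<Psi> \<zeta> \<eta> * G \<zeta> s * G \<eta> s) \<partial>lborel \<partial>lborel \<partial>lborel)
     \<le> ennreal (2 * k) * M * (\<integral>\<^sup>+s\<in>{0..t}. tail_moment (\<lambda>z. G z s) q \<partial>lborel)"
proof (rule nn_set_integral_le_cmult)
  fix s
  assume "s \<in> {0..t}"
  have "(\<integral>\<^sup>+\<zeta>\<in>{0<..q}. \<integral>\<^sup>+\<eta>\<in>{q<..}. ennreal (\<zeta> * \<Psi> \<zeta> \<eta> * G \<zeta> s * G \<eta> s) \<partial>lborel \<partial>lborel)
      \<le> ennreal (2 * k) * (\<integral>\<^sup>+\<zeta>\<in>{0<..}. ennreal (wgt \<beta> \<zeta> * G \<zeta> s) \<partial>lborel)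
          * tail_moment (\<lambda>z. G z s) q"
    using assms density_nonneg by (intro small_large_flux_le) auto
  also have "\<dots> \<le> ennreal (2 * k) * M * tail_moment (\<lambda>z. G z s) q"
    using weighted_moment_le[OF \<open>s \<in> {0..t}\<close>] by (intro mult_right_mono mult_left_mono) auto
  finally show "(\<integral>\<^sup>+\<zeta>\<in>{0<..q}. \<integral>\<^sup>+\<eta>\<in>{q<..}. ennreal (\<zeta> * \<Psi> \<zeta> \<eta> * G \<zeta> s * G \<eta> s) \<partial>lborel \<partial>lborel)
      \<le> ennreal (2 * k) * M * tail_moment (\<lambda>z. G z s) q" .
qed (use measurable_tail_moment[OF measurable_density] in auto)

lemma integrated_large_large_flux_le:
  assumes "kernel_hyp \<Psi> \<beta> k" and "1 < q"
  shows "ennreal q * (\<integral>\<^sup>+s\<in>{0..t}. \<integral>\<^sup>+\<zeta>\<in>{q<..}. \<integral>\<^sup>+\<eta>\<in>{q<..}.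
            ennreal (\<Psi> \<zeta> \<eta> * G \<zeta> s * G \<eta> s) \<partial>lborel \<partial>lborel \<partial>lborel)
     \<le> ennreal (2 * k) * M * (\<integral>\<^sup>+s\<in>{0..t}. tail_moment (\<lambda>z. G z s) q \<partial>lborel)"
proof -
  have "(\<integral>\<^sup>+s\<in>{0..t}. \<integral>\<^sup>+\<zeta>\<in>{q<..}. \<integral>\<^sup>+\<eta>\<in>{q<..}.
            ennreal (\<Psi> \<zeta> \<eta> * G \<zeta> s * G \<eta> s) \<partial>lborel \<partial>lborel \<partial>lborel)
     \<le> ennreal (2 * k / q) * M * (\<integral>\<^sup>+s\<in>{0..t}. tail_moment (\<lambda>z. G z s) q \<partial>lborel)"
  proof (rule nn_set_integral_le_cmult)
    fix s
    assume "s \<in> {0..t}"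
    have "(\<integral>\<^sup>+\<zeta>\<in>{q<..}. \<integral>\<^sup>+\<eta>\<in>{q<..}. ennreal (\<Psi> \<zeta> \<eta> * G \<zeta> s * G \<eta> s) \<partial>lborel \<partial>lborel)
        \<le> ennreal (2 * k / q) * tail_moment (\<lambda>z. G z s) q * tail_moment (\<lambda>z. G z s) q"
      using assms density_nonneg by (intro large_large_flux_le) auto
    also have "\<dots> \<le> ennreal (2 * k / q) * M * tail_moment (\<lambda>z. G z s) q"
      using tail_moment_le[OF \<open>s \<in> {0..t}\<close>] by (intro mult_right_mono mult_left_mono) auto
    finally show "(\<integral>\<^sup>+\<zeta>\<in>{q<..}. \<integral>\<^sup>+\<eta>\<in>{q<..}. ennreal (\<Psi> \<zeta> \<eta> * G \<zeta> s * G \<eta> s) \<partial>lborel \<partial>lborel)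
        \<le> ennreal (2 * k / q) * M * tail_moment (\<lambda>z. G z s) q" .
  qed (use measurable_tail_moment[OF measurable_density] in auto)
  then have "ennreal q * (\<integral>\<^sup>+s\<in>{0..t}. \<integral>\<^sup>+\<zeta>\<in>{q<..}. \<integral>\<^sup>+\<eta>\<in>{q<..}.
            ennreal (\<Psi> \<zeta> \<eta> * G \<zeta> s * G \<eta> s) \<partial>lborel \<partial>lborel \<partial>lborel)
     \<le> ennreal q * ennreal (2 * k / q) * M * (\<integral>\<^sup>+s\<in>{0..t}. tail_moment (\<lambda>z. G z s) q \<partial>lborel)"
    by (simp add: mult.assoc mult_left_mono)
  also have "ennreal q * ennreal (2 * k / q) = ennreal (2 * k)"
    using assms by (simp add: kernel_hyp_def ennreal_mult[symmetric])
  finally show ?thesis .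
qed

end

text \<open>A weak solution is only assumed jointly measurable after truncation to \<open>(0,\<infinity>) \<times> [0,T)\<close>,
  so the estimates are carried out for the truncated density \<open>G\<close>.\<close>

lemma weak_solution_moment_bounded_density:
  assumes "weak_solution \<Psi> \<beta> T gin g" and "ereal t < T"
  obtains G M where "moment_bounded_density \<beta> G t M"
    and "\<And>z s. 0 < z \<Longrightarrow> s \<in> {0..t} \<Longrightarrow> g z s = G z s"
proof -
  from assms(1) have meas: "(\<lambda>p. indicator ({0<..} \<times> tint T) p * g (fst p) (snd p)) \<in> borel_measurable borel"
    and nonneg: "\<forall>s\<in>tint T. \<forall>\<zeta>>0. 0 \<le> g \<zeta> s"
    and "\<exists>M. \<forall>s\<in>tint T. set_integrable lborel {0<..} (\<lambda>\<zeta>. wgt \<beta> \<zeta> * g \<zeta> s) \<and>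
                       (LINT \<zeta>:{0<..}|lborel. wgt \<beta> \<zeta> * g \<zeta> s) \<le> M"
    unfolding weak_solution_def by blast+
  then obtain M where integrable: "\<And>s. s \<in> tint T \<Longrightarrow> set_integrable lborel {0<..} (\<lambda>\<zeta>. wgt \<beta> \<zeta> * g \<zeta> s)"
    and bound: "\<And>s. s \<in> tint T \<Longrightarrow> (LINT \<zeta>:{0<..}|lborel. wgt \<beta> \<zeta> * g \<zeta> s) \<le> M"
    by blast
  define G where "G z s = indicator ({0<..} \<times> tint T) (z, s) * g z s" for z s
  have tint: "s \<in> tint T" if "s \<in> {0..t}" for s
  proof -
    have "ereal s \<le> ereal t"
      using that by simp
    then have "ereal s < T"
      using assms(2) by (rule le_less_trans)
    with that show ?thesis
      by (simp add: tint_def)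
  qed
  have gG: "g z s = G z s" if "0 < z" "s \<in> {0..t}" for z s
    using that tint by (simp add: G_def indicator_def)
  have "moment_bounded_density \<beta> G t (ennreal M)"
  proof
    show "(\<lambda>p. G (fst p) (snd p)) \<in> borel_measurable borel"
      using meas by (simp add: G_def)
    show "0 \<le> G z s" for z s
      using nonneg by (simp add: G_def indicator_def)
    show "(\<integral>\<^sup>+z\<in>{0<..}. ennreal (wgt \<beta> z * G z s) \<partial>lborel) \<le> ennreal M" if "s \<in> {0..t}" for s
    proof -
      have "(\<integral>\<^sup>+z\<in>{0<..}. ennreal (wgt \<beta> z * G z s) \<partial>lborel)
          = (\<integral>\<^sup>+z. ennreal (indicator {0<..} z * (wgt \<beta> z * g z s)) \<partial>lborel)"
        using gG[OF _ that] by (intro nn_integral_cong) (auto simp: indicator_def)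
      also have "\<dots> = ennreal (LINT z:{0<..}|lborel. wgt \<beta> z * g z s)"
        unfolding set_lebesgue_integral_def real_scaleR_def
        using integrable[OF tint[OF that]] nonneg tint[OF that]
        by (intro nn_integral_eq_integral AE_I2)
          (auto simp: set_integrable_def indicator_def intro!: mult_nonneg_nonneg wgt_nonneg)
      also have "\<dots> \<le> ennreal M"
        using bound[OF tint[OF that]] by (rule ennreal_leI)
      finally show ?thesis .
    qed
  qed simp
  from this gG show ?thesis
    by (rule that)
qed

lemma flux_integral_cong:
  fixes g G :: "real \<Rightarrow> real \<Rightarrow> real"
  assumes "\<And>z s. 0 < z \<Longrightarrow> s \<in> {0..t} \<Longrightarrow> g z s = G z s" and "A \<subseteq> {0<..}" "B \<subseteq> {0<..}"
  shows "(\<integral>\<^sup>+s\<in>{0..t}. \<integral>\<^sup>+\<zeta>\<in>A. \<integral>\<^sup>+\<eta>\<in>B. ennreal (\<phi> \<zeta> \<eta> * g \<zeta> s * g \<eta> s) \<partial>lborel \<partial>lborel \<partial>lborel)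
       = (\<integral>\<^sup>+s\<in>{0..t}. \<integral>\<^sup>+\<zeta>\<in>A. \<integral>\<^sup>+\<eta>\<in>B. ennreal (\<phi> \<zeta> \<eta> * G \<zeta> s * G \<eta> s) \<partial>lborel \<partial>lborel \<partial>lborel)"
  using assms by (auto intro!: nn_integral_cong simp: indicator_def subset_iff)

theorem lemma3p3:
  fixes \<Psi> :: "real \<Rightarrow> real \<Rightarrow> real" and \<beta> k :: real and T :: ereal
    and gin :: "real \<Rightarrow> real" and g :: "real \<Rightarrow> real \<Rightarrow> real" and t :: real
  assumes "kernel_hyp \<Psi> \<beta> k"
    and "0 < T"
    and "init_hyp \<beta> gin"
    and "weak_solution \<Psi> \<beta> T gin g"
    and "0 < t" and "ereal t < T"
  shows "(((\<lambda>q. \<integral>\<^sup>+ s\<in>{0..t}. \<integral>\<^sup>+ \<zeta>\<in>{0<..q}. \<integral>\<^sup>+ \<eta>\<in>{q<..}.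
              ennreal (\<zeta> * \<Psi> \<zeta> \<eta> * g \<zeta> s * g \<eta> s) \<partial>lborel \<partial>lborel \<partial>lborel)
           \<longlongrightarrow> 0) at_top) \<and>
         (((\<lambda>q. ennreal q * (\<integral>\<^sup>+ s\<in>{0..t}. \<integral>\<^sup>+ \<zeta>\<in>{q<..}. \<integral>\<^sup>+ \<eta>\<in>{q<..}.
              ennreal (\<Psi> \<zeta> \<eta> * g \<zeta> s * g \<eta> s) \<partial>lborel \<partial>lborel \<partial>lborel))
           \<longlongrightarrow> 0) at_top)"
proof -
  obtain G M where density: "moment_bounded_density \<beta> G t M"
    and gG: "\<And>z s. 0 < z \<Longrightarrow> s \<in> {0..t} \<Longrightarrow> g z s = G z s"
    using weak_solution_moment_bounded_density[OF assms(4,6)] by blast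
  interpret moment_bounded_density \<beta> G t M
    by (fact density)
  have "ennreal (2 * k) * M < \<infinity>"
    using bound_finite by (simp add: ennreal_mult_less_top)
  note tail_to_zero = ennreal_tendsto_zero_le_cmult[OF integrated_tail_moment_tendsto_zero this]
  show ?thesis
  proof (intro conjI tail_to_zero)
    show "\<forall>\<^sub>F q in at_top. (\<integral>\<^sup>+ s\<in>{0..t}. \<integral>\<^sup>+ \<zeta>\<in>{0<..q}. \<integral>\<^sup>+ \<eta>\<in>{q<..}.
              ennreal (\<zeta> * \<Psi> \<zeta> \<eta> * g \<zeta> s * g \<eta> s) \<partial>lborel \<partial>lborel \<partial>lborel)
        \<le> ennreal (2 * k) * M * (\<integral>\<^sup>+s\<in>{0..t}. tail_moment (\<lambda>z. G z s) q \<partial>lborel)"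
      using eventually_gt_at_top[of 1]
      by eventually_elim
        (subst flux_integral_cong[OF gG], auto intro: integrated_small_large_flux_le[OF assms(1)])
    show "\<forall>\<^sub>F q in at_top. ennreal q * (\<integral>\<^sup>+ s\<in>{0..t}. \<integral>\<^sup>+ \<zeta>\<in>{q<..}. \<integral>\<^sup>+ \<eta>\<in>{q<..}.
              ennreal (\<Psi> \<zeta> \<eta> * g \<zeta> s * g \<eta> s) \<partial>lborel \<partial>lborel \<partial>lborel)
        \<le> ennreal (2 * k) * M * (\<integral>\<^sup>+s\<in>{0..t}. tail_moment (\<lambda>z. G z s) q \<partial>lborel)"
      using eventually_gt_at_top[of 1]
      by eventually_elim
        (subst flux_integral_cong[OF gG], auto intro: integrated_large_large_flux_le[OF assms(1)])
  qed
qed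

end
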